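(* Let $f\in\mathbb{R}[x,y]$ be an irreducible polynomial and $X=V(f)=\{(x,y)\in\mathbb{R}^2: f(x,y)=0\}$. Then $X$ has a cell decomposition $\mathcal{A}$ with the finiteness property.
   Context: A cell decomposition of a set $X\subseteq\mathbb{R}^2$ is a partition of $X$ into (finitely or countably many) cells, each of which is a semi-algebraic set: 0-cells are points, 1-cells are subsets homeomorphic to an open interval, 2-cells are subsets homeomorphic to an open disk. A shortest-length curve in $X$ between two points $A,B\in X$ is a piecewise $C^2$ curve $\gamma$ from $A$ to $B$ lying entirely in $X$ whose length is minimal among all piecewise $C^2$ curves in $X$ from $A$ to $B$. A geodesic line segment (relative to the decomposition) is either a straight line segment or a connected arc contained (partially or entirely) in a 1-cell. A cell decomposition $\mathcal{A}$ of $X$ has the finiteness property if for every shortest-length curve $\gamma$ in $X$ between two points of $X$ and every cell $e\in\mathcal{A}$, the set $\gamma\cap e$ is either empty or has finitely many connected components, each of which is either a singleton or a geodesic line segment. *)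

theory Defs
  imports "HOL-Analysis.Analysis" "HOL-Computational_Algebra.Polynomial"
begin

text \<open>Bivariate real polynomials are represented as elements of (R[x])[y], i.e. the type
  real poly poly; this ring is canonically isomorphic to R[x,y]. Points of R^2 are pairs.\<close>

definition peval2 :: "real poly poly \<Rightarrow> real \<times> real \<Rightarrow> real" where
  "peval2 p z = poly (map_poly (\<lambda>c. poly c (fst z)) p) (snd z)"

definition zero_set :: "real poly poly \<Rightarrow> (real \<times> real) set" where
  "zero_set f = {z. peval2 f z = 0}"

inductive_set semialgebraic :: "(real \<times> real) set set" where
  sa_eq: "{z. peval2 p z = 0} \<in> semialgebraic"
| sa_pos: "{z. peval2 p z > 0} \<in> semialgebraic"
| sa_un: "S \<in> semialgebraic \<Longrightarrow> T \<in> semialgebraic \<Longrightarrow> S \<union> T \<in> semialgebraic"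
| sa_compl: "S \<in> semialgebraic \<Longrightarrow> - S \<in> semialgebraic"

definition cell0 :: "(real \<times> real) set \<Rightarrow> bool" where
  "cell0 e \<longleftrightarrow> (\<exists>a. e = {a})"

definition cell1 :: "(real \<times> real) set \<Rightarrow> bool" where
  "cell1 e \<longleftrightarrow> e homeomorphic {0<..<(1::real)}"

definition cell2 :: "(real \<times> real) set \<Rightarrow> bool" where
  "cell2 e \<longleftrightarrow> e homeomorphic ball (0::real \<times> real) 1"

definition is_cell :: "(real \<times> real) set \<Rightarrow> bool" where
  "is_cell e \<longleftrightarrow> e \<in> semialgebraic \<and> (cell0 e \<or> cell1 e \<or> cell2 e)"

definition cell_decomposition :: "(real \<times> real) set set \<Rightarrow> (real \<times> real) set \<Rightarrow> bool" where
  "cell_decomposition \<A> X \<longleftrightarrow>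
     countable \<A> \<and> (\<forall>e\<in>\<A>. is_cell e \<and> e \<noteq> {}) \<and>
     (\<forall>e\<in>\<A>. \<forall>e'\<in>\<A>. e \<noteq> e' \<longrightarrow> e \<inter> e' = {}) \<and> \<Union>\<A> = X"

definition C2_on_interval :: "(real \<Rightarrow> real \<times> real) \<Rightarrow> real \<Rightarrow> real \<Rightarrow> bool" where
  "C2_on_interval g a b \<longleftrightarrow>
     (\<exists>U h h' h''. open U \<and> {a..b} \<subseteq> U \<and> (\<forall>t\<in>{a..b}. h t = g t) \<and>
        (\<forall>t\<in>U. (h has_vector_derivative h' t) (at t) \<and> (h' has_vector_derivative h'' t) (at t)) \<and>
        continuous_on U h'')"

definition piecewise_C2_curve :: "(real \<Rightarrow> real \<times> real) \<Rightarrow> bool" where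
  "piecewise_C2_curve g \<longleftrightarrow> continuous_on {0..1} g \<and>
     (\<exists>K. finite K \<and> K \<subseteq> {0..1} \<and> 0 \<in> K \<and> 1 \<in> K \<and>
        (\<forall>a\<in>K. \<forall>b\<in>K. a < b \<and> {a<..<b} \<inter> K = {} \<longrightarrow> C2_on_interval g a b))"

definition curve_length :: "(real \<Rightarrow> real \<times> real) \<Rightarrow> real" where
  "curve_length g = integral {0..1} (\<lambda>t. norm (vector_derivative g (at t)))"

definition curve_in :: "(real \<Rightarrow> real \<times> real) \<Rightarrow> (real \<times> real) set \<Rightarrow> real \<times> real \<Rightarrow> real \<times> real \<Rightarrow> bool" where
  "curve_in g X A B \<longleftrightarrow> piecewise_C2_curve g \<and> g ` {0..1} \<subseteq> X \<and> g 0 = A \<and> g 1 = B"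

definition shortest_curve :: "(real \<Rightarrow> real \<times> real) \<Rightarrow> (real \<times> real) set \<Rightarrow> real \<times> real \<Rightarrow> real \<times> real \<Rightarrow> bool" where
  "shortest_curve g X A B \<longleftrightarrow> curve_in g X A B \<and>
     (\<forall>g'. curve_in g' X A B \<longrightarrow> curve_length g \<le> curve_length g')"

definition straight_segment :: "(real \<times> real) set \<Rightarrow> bool" where
  "straight_segment C \<longleftrightarrow> connected C \<and> (\<exists>a b. a \<noteq> b \<and> C \<subseteq> {a + t *\<^sub>R (b - a) | t. True})
      \<and> (\<exists>p q. p \<in> C \<and> q \<in> C \<and> p \<noteq> q)"

definition geodesic_segment :: "(real \<times> real) set set \<Rightarrow> (real \<times> real) set \<Rightarrow> bool" where
  "geodesic_segment \<A> C \<longleftrightarrow> straight_segment C \<or>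
     (connected C \<and> (\<exists>p q. p \<in> C \<and> q \<in> C \<and> p \<noteq> q) \<and> (\<exists>e\<in>\<A>. cell1 e \<and> C \<subseteq> e))"

definition finiteness_property :: "(real \<times> real) set set \<Rightarrow> (real \<times> real) set \<Rightarrow> bool" where
  "finiteness_property \<A> X \<longleftrightarrow>
     (\<forall>A\<in>X. \<forall>B\<in>X. \<forall>g. shortest_curve g X A B \<longrightarrow>
        (\<forall>e\<in>\<A>. let S = g ` {0..1} \<inter> e in
           S = {} \<or> (finite (components S) \<and>
             (\<forall>C\<in>components S. (\<exists>p. C = {p}) \<or> geodesic_segment \<A> C))))"

end

theory Submission
  imports Defs "HOL-Computational_Algebra.Polynomial_Factorial" "HOL-Computational_Algebra.Field_as_Ring"
begin

(* The cells come from the implicit function theorem. Irreducibility gives a Bezout identity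
   u f + v f_y = r(x) with r \<noteq> 0 (in R(x)[y], after clearing denominators), so only finitely
   many points of X satisfy f_y = 0, and every vertical line meets X in finitely many points.
   Every other point p of X has a neighbourhood in which X is the graph of a continuous function
   of x over every small interval. If moreover the abscissa of p is not dyadic, p lies inside a
   dyadic interval of some level over which X is such a graph near p; the arc of X over the
   coarsest such interval is the 1-cell of p. Minimality of the level makes two of these arcs
   equal or disjoint, and each arc contains a point over a dyadic abscissa, so there are only
   countably many. The remaining countably many points are 0-cells. If f has degree 0 in y,
   X is a finite union of vertical lines, each of them a 1-cell.

   Only the connectedness of the image K of the curve matters for the finiteness property:
   the abscissae of the points where K leaves a graph arc form an interval, because a connected
   subset of X meeting the arc between two points it avoids stays inside the arc, so K meets
   the arc in at most two components. A component with two points is a connected subset of a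
   1-cell, which is a geodesic segment by definition. *)

lemma peval2_conv_poly: "peval2 p z = poly (poly p [:snd z:]) (fst z)"
  unfolding peval2_def by (induction p) (auto simp: map_poly_pCons)

lemma peval2_mult [simp]: "peval2 (p * q) z = peval2 p z * peval2 q z"
  and peval2_add [simp]: "peval2 (p + q) z = peval2 p z + peval2 q z"
  and peval2_uminus [simp]: "peval2 (- p) z = - peval2 p z"
  and peval2_const [simp]: "peval2 [:c:] z = poly c (fst z)"
  and peval2_linear: "peval2 [:[:a:], [:b:]:] z = a + b * snd z"
  by (simp_all add: peval2_conv_poly)

lemma peval2_eq_sum: "peval2 p z = (\<Sum>i\<le>degree p. poly (coeff p i) (fst z) * snd z ^ i)"
  unfolding peval2_conv_poly poly_altdef[of p "[:snd z:]"]
  by (simp add: poly_sum poly_power)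

lemma continuous_on_peval2 [continuous_intros]:
  "continuous_on S g \<Longrightarrow> continuous_on S (\<lambda>x. peval2 p (g x))"
  unfolding peval2_eq_sum by (intro continuous_intros)

lemma closed_zero_set: "closed (zero_set f)"
  unfolding zero_set_def by (rule closed_Collect_eq) (auto intro: continuous_intros)

lemma peval2_has_real_derivative:
  "((\<lambda>y. peval2 p (x, y)) has_real_derivative peval2 (pderiv p) (x, y)) (at y)"
proof -
  have "map_poly (\<lambda>c. poly c x) (pderiv p) = pderiv (map_poly (\<lambda>c. poly c x) p)"
    by (rule poly_eqI) (simp add: coeff_map_poly coeff_pderiv)
  then show ?thesis
    unfolding peval2_def fst_conv snd_conv by (simp add: poly_DERIV)
qed

section \<open>Fibres and singular points of irreducible curves\<close>

lemma poly_lincomb_min_degree_dvd: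
  fixes F G h :: "'a::field poly"
  defines "I \<equiv> {u * F + v * G | u v. True}"
  assumes h: "h \<in> I" "h \<noteq> 0" and h_min: "\<And>h'. h' \<in> I \<Longrightarrow> h' \<noteq> 0 \<Longrightarrow> degree h \<le> degree h'"
    and "p \<in> I"
  shows "h dvd p"
proof (rule ccontr)
  assume "\<not> h dvd p"
  then have "p mod h \<noteq> 0" by (simp add: mod_eq_0_iff_dvd)
  from \<open>p \<in> I\<close> h(1) obtain u v u' v' where "p = u * F + v * G" "h = u' * F + v' * G"
    unfolding I_def by blast
  then have "p mod h = (u - (p div h) * u') * F + (v - (p div h) * v') * G"
    by (simp add: minus_div_mult_eq_mod [symmetric] algebra_simps)
  then have "p mod h \<in> I" unfolding I_def by blast
  then have "degree h \<le> degree (p mod h)" using \<open>p mod h \<noteq> 0\<close> by (rule h_min)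
  with degree_mod_less'[OF h(2) \<open>p mod h \<noteq> 0\<close>] show False by simp
qed

lemma field_poly_bezout_irreducible:
  fixes F G :: "'a::field poly"
  assumes "irreducible F" "G \<noteq> 0" "degree G < degree F"
  shows "\<exists>u v. u * F + v * G = 1"
proof -
  define I where "I = {u * F + v * G | u v. True}"
  have "F = 1 * F + 0 * G" "G = 0 * F + 1 * G" by simp_all
  then have FI: "F \<in> I" and GI: "G \<in> I" unfolding I_def by blast+
  obtain h where h: "h \<in> I" "h \<noteq> 0"
    and h_min: "\<And>h'. h' \<in> I \<Longrightarrow> h' \<noteq> 0 \<Longrightarrow> degree h \<le> degree h'"
    using ex_has_least_nat[of "\<lambda>h. h \<in> I \<and> h \<noteq> 0" G degree] GI assms(2) by blast
  have h_dvd: "h dvd p" if "p \<in> I" for p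
    using h h_min that unfolding I_def by (rule poly_lincomb_min_degree_dvd)
  have "\<not> F dvd G"
  proof
    assume "F dvd G"
    then have "degree F \<le> degree G" using assms(2) by (rule dvd_imp_degree_le)
    with assms(3) show False by simp
  qed
  then have "\<not> F dvd h"
    using h_dvd[OF GI] dvd_trans by blast
  with h_dvd[OF FI] assms(1) have "is_unit h"
    unfolding irreducible_altdef by blast
  then obtain k where "1 = h * k" by (rule dvdE)
  moreover obtain u v where "h = u * F + v * G" using h(1) unfolding I_def by blast
  ultimately have "(k * u) * F + (k * v) * G = 1" by (simp add: algebra_simps)
  then show ?thesis by blast
qed

lemma fract_poly_clear_denominators:
  fixes p :: "'a::{factorial_semiring,semiring_Gcd,ring_gcd,idom_divide,semiring_gcd_mult_normalize} fract poly"
  obtains d q where "d \<noteq> 0" "smult (to_fract d) p = fract_poly q"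
proof -
  obtain c q where p: "p = smult c (fract_poly q)"
    using content_decompose_fract[of p] by metis
  define n d where "n = fst (quot_of_fract c)" and "d = snd (quot_of_fract c)"
  have "d \<noteq> 0" by (simp add: d_def snd_quot_of_fract_nonzero)
  moreover have "c = to_fract n / to_fract d"
    unfolding n_def d_def Fract_conv_to_fract[symmetric] by simp
  ultimately have "smult (to_fract d) p = fract_poly (smult n q)"
    by (simp add: p)
  with \<open>d \<noteq> 0\<close> show ?thesis by (rule that)
qed

lemma irreducible_poly_bezout_const:
  fixes f g :: "'a::{factorial_semiring,semiring_Gcd,ring_gcd,idom_divide,semiring_gcd_mult_normalize} poly"
  assumes "irreducible f" "g \<noteq> 0" "degree g < degree f"
  shows "\<exists>u v r. r \<noteq> 0 \<and> u * f + v * g = [:r:]"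
proof -
  have "irreducible (fract_poly f)"
    using assms nonconst_poly_irreducible_iff[of f] by simp
  moreover have "degree (fract_poly g) < degree (fract_poly f)"
    using assms(3) by (simp add: degree_map_poly)
  ultimately obtain u v where uv: "u * fract_poly f + v * fract_poly g = 1"
    using field_poly_bezout_irreducible assms(2) by (metis fract_poly_eq_0_iff)
  obtain d1 u' where d1: "d1 \<noteq> 0" "smult (to_fract d1) u = fract_poly u'"
    by (rule fract_poly_clear_denominators)
  obtain d2 v' where d2: "d2 \<noteq> 0" "smult (to_fract d2) v = fract_poly v'"
    by (rule fract_poly_clear_denominators)
  have "fract_poly (smult d2 u' * f + smult d1 v' * g)
      = smult (to_fract (d1 * d2)) (u * fract_poly f + v * fract_poly g)"
    by (simp flip: d1(2) d2(2) add: algebra_simps smult_add_right)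
  also have "\<dots> = fract_poly [:d1 * d2:]"
    by (simp add: uv one_pCons map_poly_pCons)
  finally have "smult d2 u' * f + smult d1 v' * g = [:d1 * d2:]"
    by (simp only: fract_poly_eq_iff)
  with d1(1) d2(1) show ?thesis by (metis mult_eq_0_iff)
qed

lemma finite_fibre_zero_set:
  fixes f :: "real poly poly"
  assumes "irreducible f" "degree f \<noteq> 0"
  shows "finite {y. (x, y) \<in> zero_set f}"
proof -
  have "map_poly (\<lambda>c. poly c x) f \<noteq> 0"
  proof
    assume "map_poly (\<lambda>c. poly c x) f = 0"
    then have "[:-x, 1:] dvd coeff f n" for n
      by (metis coeff_0 coeff_map_poly poly_0 poly_eq_0_iff_dvd)
    then have "[:[:-x, 1:]:] dvd f"
      by (simp add: const_poly_dvd_iff)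
    then have "[:-x, 1:] dvd content f"
      by (simp add: const_poly_dvd_iff_dvd_content)
    moreover have "content f = 1"
      using assms nonconst_poly_irreducible_iff by blast
    ultimately show False by (simp add: is_unit_poly_iff)
  qed
  then show ?thesis
    unfolding zero_set_def peval2_def by (simp add: poly_roots_finite)
qed

lemma finite_singular_zero_set:
  fixes f :: "real poly poly"
  assumes "irreducible f" "degree f \<noteq> 0"
  shows "finite {z \<in> zero_set f. peval2 (pderiv f) z = 0}"
proof -
  have "pderiv f \<noteq> 0" "degree (pderiv f) < degree f"
    using assms(2) by (simp_all add: pderiv_eq_0_iff degree_pderiv)
  then obtain u v r where r: "r \<noteq> 0" "u * f + v * pderiv f = [:r:]"
    using irreducible_poly_bezout_const assms(1) by blast
  have "{z \<in> zero_set f. peval2 (pderiv f) z = 0} \<subseteq>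
        (\<Union>x\<in>{x. poly r x = 0}. Pair x ` {y. (x, y) \<in> zero_set f})"
  proof clarify
    fix x y assume "(x, y) \<in> zero_set f" "peval2 (pderiv f) (x, y) = 0"
    moreover have "peval2 (u * f + v * pderiv f) (x, y) = poly r x"
      using r(2) by simp
    ultimately show "(x, y) \<in> (\<Union>x\<in>{x. poly r x = 0}. Pair x ` {y. (x, y) \<in> zero_set f})"
      by (auto simp: zero_set_def)
  qed
  moreover have "finite (\<Union>x\<in>{x. poly r x = 0}. Pair x ` {y. (x, y) \<in> zero_set f})"
    using poly_roots_finite[OF r(1)] finite_fibre_zero_set[OF assms] by blast
  ultimately show ?thesis by (rule finite_subset)
qed

lemma finite_components_connected: "connected K \<Longrightarrow> finite (components K)"
  by (cases "K = {}") (simp_all add: components_eq_sing_iff[THEN iffD2])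

lemma finite_components_meeting_connected:
  assumes "connected A" "A \<subseteq> S"
  shows "finite {C \<in> components S. C \<inter> A \<noteq> {}}"
proof (cases "{C \<in> components S. C \<inter> A \<noteq> {}} = {}")
  case False
  then obtain C0 where C0: "C0 \<in> components S" "C0 \<inter> A \<noteq> {}" by blast
  have "C = C0" if "C \<in> components S" "C \<inter> A \<noteq> {}" for C
  proof -
    have "A \<subseteq> C" "A \<subseteq> C0"
      using components_maximal[OF that(1) assms] components_maximal[OF C0(1) assms] that(2) C0(2)
      by (simp_all add: Int_commute)
    with that(2) have "C \<inter> C0 \<noteq> {}" by blast
    then show ?thesis using components_nonoverlap[OF that(1) C0(1)] by simp
  qed
  then have "{C \<in> components S. C \<inter> A \<noteq> {}} \<subseteq> {C0}" by blast
  then show ?thesis by (rule finite_subset) simp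
qed (metis finite.emptyI)

lemma finite_components_Un:
  assumes "connected A" "connected B"
  shows "finite (components (A \<union> B))"
proof -
  have "C \<inter> A \<noteq> {} \<or> C \<inter> B \<noteq> {}" if "C \<in> components (A \<union> B)" for C
    using in_components_nonempty[OF that] in_components_subset[OF that] by blast
  then have "components (A \<union> B) \<subseteq>
      {C \<in> components (A \<union> B). C \<inter> A \<noteq> {}} \<union> {C \<in> components (A \<union> B). C \<inter> B \<noteq> {}}"
    by blast
  then show ?thesis
    by (rule finite_subset) (intro finite_UnI finite_components_meeting_connected assms; blast)
qed

lemma Diff_is_interval_Un:
  fixes I J :: "real set"
  assumes "is_interval I" "is_interval J"
  obtains L R where "is_interval L" "is_interval R" "I - J = L \<union> R"
proof (rule that[of "{x \<in> I. \<forall>j\<in>J. x < j}" "{x \<in> I. \<forall>j\<in>J. j < x}"])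
  show "is_interval {x \<in> I. \<forall>j\<in>J. x < j}"
    unfolding is_interval_1
  proof (intro ballI allI impI)
    fix p q x assume p: "p \<in> {x \<in> I. \<forall>j\<in>J. x < j}" and q: "q \<in> {x \<in> I. \<forall>j\<in>J. x < j}"
      and x: "p \<le> x \<and> x \<le> q"
    have "x \<in> I" using assms(1) p q x unfolding is_interval_1 by blast
    moreover have "x < j" if "j \<in> J" for j
    proof -
      from q that have "q < j" by blast
      with x show ?thesis by linarith
    qed
    ultimately show "x \<in> {x \<in> I. \<forall>j\<in>J. x < j}" by blast
  qed
  show "is_interval {x \<in> I. \<forall>j\<in>J. j < x}"
    unfolding is_interval_1
  proof (intro ballI allI impI)
    fix p q x assume p: "p \<in> {x \<in> I. \<forall>j\<in>J. j < x}" and q: "q \<in> {x \<in> I. \<forall>j\<in>J. j < x}"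
      and x: "p \<le> x \<and> x \<le> q"
    have "x \<in> I" using assms(1) p q x unfolding is_interval_1 by blast
    moreover have "j < x" if "j \<in> J" for j
    proof -
      from p that have "j < p" by blast
      with x show ?thesis by linarith
    qed
    ultimately show "x \<in> {x \<in> I. \<forall>j\<in>J. j < x}" by blast
  qed
  show "I - J = {x \<in> I. \<forall>j\<in>J. x < j} \<union> {x \<in> I. \<forall>j\<in>J. j < x}"
  proof
    show "{x \<in> I. \<forall>j\<in>J. x < j} \<union> {x \<in> I. \<forall>j\<in>J. j < x} \<subseteq> I - J"
      using less_irrefl by blast
    show "I - J \<subseteq> {x \<in> I. \<forall>j\<in>J. x < j} \<union> {x \<in> I. \<forall>j\<in>J. j < x}"
    proof
      fix x assume x: "x \<in> I - J"
      show "x \<in> {x \<in> I. \<forall>j\<in>J. x < j} \<union> {x \<in> I. \<forall>j\<in>J. j < x}"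
      proof (rule ccontr)
        assume "\<not> ?thesis"
        with x obtain j1 j2 where "j1 \<in> J" "j2 \<in> J" "j1 \<le> x" "x \<le> j2"
          by (auto simp: not_less)
        with x assms(2) show False unfolding is_interval_1 by blast
      qed
    qed
  qed
qed

lemma cell1_iff_homeomorphic_UNIV: "cell1 e \<longleftrightarrow> e homeomorphic (UNIV :: real set)"
proof -
  have "{0<..<1::real} homeomorphic (UNIV :: real set)"
    by (rule homeomorphic_open_interval_UNIV) simp
  then show ?thesis
    unfolding cell1_def by (meson homeomorphic_sym homeomorphic_trans)
qed

lemma semialgebraic_Int:
  assumes "S \<in> semialgebraic" "T \<in> semialgebraic"
  shows "S \<inter> T \<in> semialgebraic"
proof -
  have "- (- S \<union> - T) \<in> semialgebraic"
    using assms by (intro sa_compl sa_un)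
  then show ?thesis by simp
qed

lemma semialgebraic_box: "{a<..<b} \<times> {c<..<d} \<in> semialgebraic"
proof -
  have box: "{a<..<b} \<times> {c<..<d} =
      ({z. peval2 [:[:-a, 1:]:] z > 0} \<inter> {z. peval2 [:[:b, -1:]:] z > 0}) \<inter>
      ({z. peval2 [:[:-c:], [:1:]:] z > 0} \<inter> {z. peval2 [:[:d:], [:-1:]:] z > 0})"
    by (auto simp: peval2_linear)
  show ?thesis
    unfolding box by (intro semialgebraic_Int sa_pos)
qed

lemma semialgebraic_singleton: "{p} \<in> semialgebraic"
proof -
  obtain a b where p: "p = (a, b)" by fastforce
  define q :: "real poly poly" where
    "q = [:[:-a, 1:]:] * [:[:-a, 1:]:] + [:[:-b:], [:1:]:] * [:[:-b:], [:1:]:]"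
  have "peval2 q z = (fst z - a)\<^sup>2 + (snd z - b)\<^sup>2" for z
    unfolding q_def peval2_add peval2_mult peval2_const peval2_linear by (simp add: power2_eq_square)
  then have "{z. peval2 q z = 0} = {p}"
    by (auto simp: p prod_eq_iff)
  then show ?thesis using sa_eq[of q] by simp
qed

lemma semialgebraic_vertical_line: "{r} \<times> UNIV \<in> semialgebraic"
proof -
  have "{z. peval2 [:[:-r, 1:]:] z = 0} = {r} \<times> UNIV"
    by auto
  then show ?thesis using sa_eq[of "[:[:-r, 1:]:]"] by simp
qed

lemma component_in_cell_geodesic:
  assumes "C \<in> components (S \<inter> e)" "e \<in> \<A>" "cell0 e \<or> cell1 e"
  shows "(\<exists>p. C = {p}) \<or> geodesic_segment \<A> C"
proof (cases "\<exists>p q. p \<in> C \<and> q \<in> C \<and> p \<noteq> q")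
  case True
  moreover have "C \<subseteq> e" "connected C"
    using in_components_subset[OF assms(1)] in_components_connected[OF assms(1)] by auto
  moreover have "cell1 e"
    using assms(3) True \<open>C \<subseteq> e\<close> unfolding cell0_def by blast
  ultimately show ?thesis
    using assms(2) unfolding geodesic_segment_def by blast
next
  case False
  then show ?thesis
    using in_components_nonempty[OF assms(1)] by blast
qed

lemma finiteness_propertyI:
  assumes cells: "\<And>e. e \<in> \<A> \<Longrightarrow> cell0 e \<or> cell1 e"
    and finite: "\<And>K e. connected K \<Longrightarrow> K \<subseteq> X \<Longrightarrow> e \<in> \<A> \<Longrightarrow> finite (components (K \<inter> e))"
  shows "finiteness_property \<A> X"
  unfolding finiteness_property_def Let_def
proof (intro ballI allI impI)
  fix P Q g e assume g: "shortest_curve g X P Q" and e: "e \<in> \<A>"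
  have "continuous_on {0..1} g" "g ` {0..1} \<subseteq> X"
    using g unfolding shortest_curve_def curve_in_def piecewise_C2_curve_def by auto
  then have "finite (components (g ` {0..1} \<inter> e))"
    using finite[OF _ _ e] connected_continuous_image[OF _ connected_Icc] by blast
  moreover have "\<forall>C\<in>components (g ` {0..1} \<inter> e). (\<exists>p. C = {p}) \<or> geodesic_segment \<A> C"
    using component_in_cell_geodesic[OF _ e cells[OF e]] by blast
  ultimately show "g ` {0..1} \<inter> e = {} \<or> finite (components (g ` {0..1} \<inter> e)) \<and>
      (\<forall>C\<in>components (g ` {0..1} \<inter> e). (\<exists>p. C = {p}) \<or> geodesic_segment \<A> C)"
    by blast
qed

section \<open>Graph boxes\<close>

definition graph_box :: "(real \<times> real) set \<Rightarrow> real \<Rightarrow> real \<Rightarrow> real \<Rightarrow> real \<Rightarrow> bool" where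
  "graph_box X a b c d \<longleftrightarrow> a < b \<and> c < d \<and>
     (\<forall>x\<in>{a..b}. (\<exists>!y. y \<in> {c..d} \<and> (x, y) \<in> X) \<and> (x, c) \<notin> X \<and> (x, d) \<notin> X)"

definition graph_fun :: "(real \<times> real) set \<Rightarrow> real \<Rightarrow> real \<Rightarrow> real \<Rightarrow> real" where
  "graph_fun X c d x = (THE y. y \<in> {c..d} \<and> (x, y) \<in> X)"

definition graph_arc :: "(real \<times> real) set \<Rightarrow> real \<Rightarrow> real \<Rightarrow> real \<Rightarrow> real \<Rightarrow> (real \<times> real) set" where
  "graph_arc X a b c d = (\<lambda>x. (x, graph_fun X c d x)) ` {a<..<b}"

lemma graph_box_graph_fun:
  assumes "graph_box X a b c d" "x \<in> {a..b}"
  shows "graph_fun X c d x \<in> {c<..<d}" "(x, graph_fun X c d x) \<in> X"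
proof -
  have ex1: "\<exists>!y. y \<in> {c..d} \<and> (x, y) \<in> X" and ends: "(x, c) \<notin> X" "(x, d) \<notin> X"
    using assms unfolding graph_box_def by auto
  have "graph_fun X c d x \<in> {c..d} \<and> (x, graph_fun X c d x) \<in> X"
    unfolding graph_fun_def by (rule theI'[OF ex1])
  with ends show "graph_fun X c d x \<in> {c<..<d}" "(x, graph_fun X c d x) \<in> X"
    by (metis atLeastAtMost_iff greaterThanLessThan_iff order_less_le)+
qed

lemma graph_box_graph_fun_unique:
  assumes "graph_box X a b c d" "x \<in> {a..b}" "y \<in> {c..d}" "(x, y) \<in> X"
  shows "graph_fun X c d x = y"
proof -
  have ex1: "\<exists>!y. y \<in> {c..d} \<and> (x, y) \<in> X"
    using assms(1,2) unfolding graph_box_def by blast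
  show ?thesis
    unfolding graph_fun_def by (rule the1_equality[OF ex1]) (use assms(3,4) in simp)
qed

lemma graph_box_Int_strip:
  assumes "graph_box X a b c d" "S \<subseteq> {a..b}" "{c<..<d} \<subseteq> T" "T \<subseteq> {c..d}"
  shows "X \<inter> (S \<times> T) = (\<lambda>x. (x, graph_fun X c d x)) ` S"
proof (intro equalityI subsetI)
  fix z assume "z \<in> X \<inter> (S \<times> T)"
  then obtain x y where z: "z = (x, y)" "(x, y) \<in> X" "x \<in> S" "y \<in> T" by auto
  then have "graph_fun X c d x = y"
    using graph_box_graph_fun_unique[OF assms(1)] assms(2,4) by blast
  with z show "z \<in> (\<lambda>x. (x, graph_fun X c d x)) ` S" by auto
next
  fix z assume "z \<in> (\<lambda>x. (x, graph_fun X c d x)) ` S"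
  then obtain x where x: "x \<in> S" "z = (x, graph_fun X c d x)" by blast
  then have "x \<in> {a..b}" using assms(2) by blast
  then have "graph_fun X c d x \<in> T" "(x, graph_fun X c d x) \<in> X"
    using graph_box_graph_fun[OF assms(1)] assms(3) by blast+
  with x show "z \<in> X \<inter> (S \<times> T)" by simp
qed

lemma continuous_on_graph_fun:
  assumes "closed X" "graph_box X a b c d"
  shows "continuous_on {a..b} (graph_fun X c d)"
proof (rule continuous_from_closed_graph)
  show "compact {c..d}" by simp
  show "graph_fun X c d \<in> {a..b} \<rightarrow> {c..d}"
    using graph_box_graph_fun(1)[OF assms(2)] by fastforce
  have "X \<inter> ({a..b} \<times> {c..d}) = (\<lambda>x. (x, graph_fun X c d x)) ` {a..b}"
    by (rule graph_box_Int_strip[OF assms(2)]) auto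
  then show "closed ((\<lambda>x. (x, graph_fun X c d x)) ` {a..b})"
    using assms(1) by (metis closed_Int closed_Times closed_atLeastAtMost)
qed

lemma graph_fun_agree:
  assumes "closed X" and box1: "graph_box X a1 b1 c1 d1" and box2: "graph_box X a2 b2 c2 d2"
    and x0: "x0 \<in> {a1..b1} \<inter> {a2..b2}" "graph_fun X c1 d1 x0 = graph_fun X c2 d2 x0"
    and x: "x \<in> {a1..b1} \<inter> {a2..b2}"
  shows "graph_fun X c1 d1 x = graph_fun X c2 d2 x"
proof -
  define I where "I = {a1..b1} \<inter> {a2..b2}"
  let ?g = "graph_fun X c2 d2"
  have cont: "continuous_on I ?g"
    using continuous_on_graph_fun[OF assms(1) box2] by (rule continuous_on_subset) (simp add: I_def)
  have agree_iff: "graph_fun X c1 d1 t = ?g t \<longleftrightarrow> ?g t \<in> {c1..d1}"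
    and open_iff: "?g t \<in> {c1..d1} \<longleftrightarrow> ?g t \<in> {c1<..<d1}" if "t \<in> I" for t
  proof -
    have in1: "t \<in> {a1..b1}" and in2: "t \<in> {a2..b2}" using that by (auto simp: I_def)
    have on_graph: "(t, ?g t) \<in> X" by (rule graph_box_graph_fun(2)[OF box2 in2])
    moreover have "(t, c1) \<notin> X" "(t, d1) \<notin> X" using box1 in1 unfolding graph_box_def by auto
    ultimately show "?g t \<in> {c1..d1} \<longleftrightarrow> ?g t \<in> {c1<..<d1}"
      by (metis atLeastAtMost_iff greaterThanLessThan_iff order_less_le)
    show "graph_fun X c1 d1 t = ?g t \<longleftrightarrow> ?g t \<in> {c1..d1}"
      using graph_box_graph_fun(1)[OF box1 in1] graph_box_graph_fun_unique[OF box1 in1 _ on_graph]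
      by auto
  qed
  \<comment> \<open>so the agreement set is both closed and open in the interval \<open>I\<close>\<close>
  define E where "E = I \<inter> ?g -` {c1..d1}"
  have "closedin (top_of_set I) E"
    unfolding E_def by (rule continuous_closedin_preimage[OF cont]) simp
  moreover have "E = I \<inter> ?g -` {c1<..<d1}"
    unfolding E_def using open_iff by auto
  then have "openin (top_of_set I) E"
    using continuous_openin_preimage_gen[OF cont] by simp
  moreover have "connected I"
    unfolding I_def by (simp add: is_interval_connected is_interval_Int)
  moreover have "x0 \<in> E"
    using x0 agree_iff unfolding E_def I_def by simp
  ultimately have "E = I"
    unfolding connected_clopen by blast
  moreover have "x \<in> I" using x by (simp add: I_def)
  ultimately have "?g x \<in> {c1..d1}" unfolding E_def by blast
  with agree_iff[OF \<open>x \<in> I\<close>] show ?thesis by simp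
qed

lemma semialgebraic_graph_arc:
  assumes "X \<in> semialgebraic" "graph_box X a b c d"
  shows "graph_arc X a b c d \<in> semialgebraic"
proof -
  have "X \<inter> ({a<..<b} \<times> {c<..<d}) = graph_arc X a b c d"
    unfolding graph_arc_def by (rule graph_box_Int_strip[OF assms(2)]) auto
  then show ?thesis
    using semialgebraic_Int[OF assms(1) semialgebraic_box[of a b c d]] by simp
qed

lemma cell1_graph_arc:
  assumes "closed X" "graph_box X a b c d"
  shows "cell1 (graph_arc X a b c d)"
proof -
  have "homeomorphism (graph_arc X a b c d) {a<..<b} fst (\<lambda>x. (x, graph_fun X c d x))"
    unfolding homeomorphism_def graph_arc_def
    by (auto simp: image_image
        intro!: continuous_intros continuous_on_subset[OF continuous_on_graph_fun[OF assms]])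
  then have "graph_arc X a b c d homeomorphic {a<..<b}"
    unfolding homeomorphic_def by blast
  also have "{a<..<b} homeomorphic (UNIV :: real set)"
    using assms(2) unfolding graph_box_def by (simp add: homeomorphic_open_interval_UNIV)
  finally show ?thesis
    unfolding cell1_iff_homeomorphic_UNIV .
qed

lemma connected_subset_graph_arc:
  assumes "closed X" and box: "graph_box X a b c d" and K: "connected K" "K \<subseteq> X"
    and vw: "a \<le> v" "v < w" "w \<le> b"
    and ends: "(v, graph_fun X c d v) \<notin> K" "(w, graph_fun X c d w) \<notin> K"
    and meets: "K \<inter> graph_arc X v w c d \<noteq> {}"
  shows "K \<subseteq> graph_arc X v w c d"
proof -
  let ?G = "\<lambda>x. (x, graph_fun X c d x)"
  define U1 where "U1 = {v<..<w} \<times> {c<..<d}"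
  define U2 where "U2 = - (?G ` {v..w})"
  have arc: "X \<inter> U1 = graph_arc X v w c d"
    unfolding U1_def graph_arc_def by (rule graph_box_Int_strip[OF box]) (use vw in auto)
  have "open U1" unfolding U1_def by (simp add: open_Times)
  have "compact (?G ` {v..w})"
    using vw by (intro compact_continuous_image continuous_intros
        continuous_on_subset[OF continuous_on_graph_fun[OF assms(1) box]]) auto
  then have "open U2" unfolding U2_def by (simp add: compact_imp_closed open_Compl)
  have "U1 \<inter> K \<subseteq> X \<inter> U1" using K(2) by blast
  also have "\<dots> \<subseteq> ?G ` {v..w}" unfolding arc graph_arc_def by (rule image_mono) auto
  finally have disjoint: "U1 \<inter> U2 \<inter> K = {}"
    unfolding U2_def by blast
  have cover: "K \<subseteq> U1 \<union> U2"
  proof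
    fix z assume "z \<in> K"
    show "z \<in> U1 \<union> U2"
    proof (cases "z \<in> ?G ` {v..w}")
      case True
      then obtain x where x: "x \<in> {v..w}" "z = ?G x" by blast
      with ends \<open>z \<in> K\<close> have "x \<noteq> v" "x \<noteq> w" by auto
      with x(1) have "x \<in> {v<..<w}" by auto
      moreover have "graph_fun X c d x \<in> {c<..<d}"
        using graph_box_graph_fun(1)[OF box] x(1) vw by auto
      ultimately show ?thesis unfolding U1_def x(2) by simp
    qed (simp add: U2_def)
  qed
  moreover have "U1 \<inter> K \<noteq> {}"
    using arc meets by auto
  ultimately have "U2 \<inter> K = {}"
    using connectedD[OF K(1) \<open>open U1\<close> \<open>open U2\<close> disjoint] by blast
  with cover K(2) arc show ?thesis by blast
qed

lemma is_interval_graph_arc_avoided: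
  assumes "closed X" "graph_box X a b c d" "connected K" "K \<subseteq> X"
    and not_sub: "\<not> K \<subseteq> graph_arc X a b c d"
  shows "is_interval {x \<in> {a<..<b}. (x, graph_fun X c d x) \<notin> K}" (is "is_interval ?J")
  unfolding is_interval_1
proof (intro ballI allI impI)
  let ?G = "\<lambda>x. (x, graph_fun X c d x)"
  fix v w u assume v: "v \<in> ?J" and w: "w \<in> ?J" and u: "v \<le> u \<and> u \<le> w"
  show "u \<in> ?J"
  proof (rule ccontr)
    assume "u \<notin> ?J"
    moreover have "u \<in> {a<..<b}" using v w u by auto
    ultimately have "?G u \<in> K" by blast
    moreover have "?G v \<notin> K" "?G w \<notin> K" using v w by auto
    ultimately have "v < u" "u < w" using u by (auto simp: order_le_less)
    then have "?G u \<in> graph_arc X v w c d"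
      unfolding graph_arc_def by auto
    with \<open>?G u \<in> K\<close> have "K \<inter> graph_arc X v w c d \<noteq> {}"
      by blast
    moreover have "a \<le> v" "w \<le> b" using v w by auto
    ultimately have "K \<subseteq> graph_arc X v w c d"
      using \<open>?G v \<notin> K\<close> \<open>?G w \<notin> K\<close> \<open>v < u\<close> \<open>u < w\<close>
      by (intro connected_subset_graph_arc[OF assms(1-4)]) simp_all
    moreover have "graph_arc X v w c d \<subseteq> graph_arc X a b c d"
      unfolding graph_arc_def using \<open>a \<le> v\<close> \<open>w \<le> b\<close> by (intro image_mono) auto
    ultimately show False using not_sub by blast
  qed
qed

lemma finite_components_Int_graph_arc:
  assumes "closed X" and box: "graph_box X a b c d" and K: "connected K" "K \<subseteq> X"
  shows "finite (components (K \<inter> graph_arc X a b c d))"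
proof (cases "K \<subseteq> graph_arc X a b c d")
  case True
  then show ?thesis
    using finite_components_connected[OF K(1)] by (simp add: Int_absorb2)
next
  case False
  let ?G = "\<lambda>x. (x, graph_fun X c d x)"
  define J where "J = {x \<in> {a<..<b}. ?G x \<notin> K}"
  have "is_interval {a<..<b}"
    unfolding is_interval_1 by auto
  then obtain L R where LR: "is_interval L" "is_interval R" "{a<..<b} - J = L \<union> R"
    using Diff_is_interval_Un is_interval_graph_arc_avoided[OF assms False] unfolding J_def by blast
  have "K \<inter> graph_arc X a b c d = ?G ` ({a<..<b} - J)"
    unfolding graph_arc_def J_def by auto
  also have "\<dots> = ?G ` L \<union> ?G ` R"
    by (simp add: LR(3) image_Un)
  finally have eq: "K \<inter> graph_arc X a b c d = ?G ` L \<union> ?G ` R" .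
  have cont: "continuous_on ({a<..<b} - J) ?G"
    by (intro continuous_intros continuous_on_subset[OF continuous_on_graph_fun[OF assms(1) box]])
      auto
  have "connected (?G ` L)" "connected (?G ` R)"
    using LR by (intro connected_continuous_image is_interval_connected
        continuous_on_subset[OF cont]; auto)+
  then show ?thesis
    unfolding eq by (rule finite_components_Un)
qed

section \<open>Zero sets are locally graphs at regular points\<close>

definition locally_graph :: "(real \<times> real) set \<Rightarrow> real \<times> real \<Rightarrow> bool" where
  "locally_graph X p \<longleftrightarrow> (\<exists>\<delta>>0. \<exists>c d. c < snd p \<and> snd p < d \<and>
     (\<forall>a b. fst p - \<delta> \<le> a \<longrightarrow> a < b \<longrightarrow> b \<le> fst p + \<delta> \<longrightarrow> graph_box X a b c d))"

lemma ex1_zero_strict_mono_on: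
  fixes g :: "real \<Rightarrow> real"
  assumes "c \<le> d" "continuous_on {c..d} g" "strict_mono_on {c..d} g" "g c < 0" "0 < g d"
  shows "\<exists>!y. y \<in> {c..d} \<and> g y = 0"
proof -
  obtain y where y: "y \<in> {c..d}" "g y = 0"
    using IVT'[of g c 0 d] assms by auto
  show ?thesis
  proof (rule ex1I[of _ y])
    show "y \<in> {c..d} \<and> g y = 0" using y by simp
    show "y' = y" if "y' \<in> {c..d} \<and> g y' = 0" for y'
      using strict_mono_on_eqD[OF assms(3), of y y'] that y by simp
  qed
qed

lemma strict_mono_on_peval2:
  assumes "\<And>y. y \<in> {c..d} \<Longrightarrow> 0 < peval2 (pderiv f) (x, y)"
  shows "strict_mono_on {c..d} (\<lambda>y. peval2 f (x, y))"
proof (rule strict_mono_onI)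
  fix y1 y2 :: real assume y12: "y1 \<in> {c..d}" "y2 \<in> {c..d}" "y1 < y2"
  show "peval2 f (x, y1) < peval2 f (x, y2)"
  proof (rule DERIV_pos_imp_increasing[OF \<open>y1 < y2\<close>])
    fix y assume "y1 \<le> y" "y \<le> y2"
    with y12 have "0 < peval2 (pderiv f) (x, y)" by (intro assms) auto
    with peval2_has_real_derivative
    show "\<exists>D. ((\<lambda>y. peval2 f (x, y)) has_real_derivative D) (at y) \<and> 0 < D"
      by blast
  qed
qed

lemma strict_mono_on_peval2_near:
  assumes "0 < peval2 (pderiv f) (x0, y0)"
  obtains \<eta> where "\<eta> > 0"
    "\<And>x. \<bar>x - x0\<bar> \<le> \<eta> \<Longrightarrow> strict_mono_on {y0 - \<eta>..y0 + \<eta>} (\<lambda>y. peval2 f (x, y))"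
proof -
  have "open {z. 0 < peval2 (pderiv f) z}"
    by (rule open_Collect_less) (auto intro: continuous_intros)
  then obtain r where "r > 0" and r: "ball (x0, y0) r \<subseteq> {z. 0 < peval2 (pderiv f) z}"
    using assms open_contains_ball by blast
  have "strict_mono_on {y0 - r / 3..y0 + r / 3} (\<lambda>y. peval2 f (x, y))" if "\<bar>x - x0\<bar> \<le> r / 3" for x
  proof (rule strict_mono_on_peval2)
    fix y assume "y \<in> {y0 - r / 3..y0 + r / 3}"
    then have "dist y0 y \<le> r / 3"
      unfolding dist_real_def abs_le_iff atLeastAtMost_iff by linarith
    moreover have "dist x0 x \<le> r / 3" using that by (simp add: dist_real_def abs_minus_commute)
    moreover have "dist (x0, y0) (x, y) \<le> dist x0 x + dist y0 y"
      using norm_Pair_le[of "x0 - x" "y0 - y"] by (simp add: dist_norm)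
    ultimately have "(x, y) \<in> ball (x0, y0) r"
      using \<open>r > 0\<close> unfolding mem_ball by linarith
    with r show "0 < peval2 (pderiv f) (x, y)" by blast
  qed
  moreover have "r / 3 > 0" using \<open>r > 0\<close> by simp
  ultimately show ?thesis using that by blast
qed

lemma graph_box_zero_set:
  assumes "a < b" "c < d"
    and "\<And>x. x \<in> {a..b} \<Longrightarrow>
      strict_mono_on {c..d} (\<lambda>y. peval2 f (x, y)) \<and> peval2 f (x, c) < 0 \<and> 0 < peval2 f (x, d)"
  shows "graph_box (zero_set f) a b c d"
  unfolding graph_box_def
proof (intro conjI ballI)
  fix x assume "x \<in> {a..b}"
  then have incr: "strict_mono_on {c..d} (\<lambda>y. peval2 f (x, y))"
    and signs: "peval2 f (x, c) < 0" "0 < peval2 f (x, d)"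
    using assms(3) by blast+
  then show "(x, c) \<notin> zero_set f" "(x, d) \<notin> zero_set f"
    by (auto simp: zero_set_def)
  have "continuous_on {c..d} (\<lambda>y. peval2 f (x, y))"
    by (intro continuous_intros)
  with \<open>c < d\<close> incr signs have "\<exists>!y. y \<in> {c..d} \<and> peval2 f (x, y) = 0"
    by (intro ex1_zero_strict_mono_on) auto
  then show "\<exists>!y. y \<in> {c..d} \<and> (x, y) \<in> zero_set f"
    by (simp add: zero_set_def)
qed (use assms in auto)

lemma locally_graph_zero_set_pderiv_pos:
  assumes "p \<in> zero_set f" "0 < peval2 (pderiv f) p"
  shows "locally_graph (zero_set f) p"
proof -
  obtain x0 y0 where p: "p = (x0, y0)" by fastforce
  obtain \<eta> where "\<eta> > 0"
    and incr: "\<And>x. \<bar>x - x0\<bar> \<le> \<eta> \<Longrightarrow> strict_mono_on {y0 - \<eta>..y0 + \<eta>} (\<lambda>y. peval2 f (x, y))"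
    using strict_mono_on_peval2_near assms(2) unfolding p by blast
  define c d where "c = y0 - \<eta>" and "d = y0 + \<eta>"
  have "peval2 f (x0, y0) = 0" using assms(1) by (simp add: p zero_set_def)
  then have "peval2 f (x0, c) < 0" "0 < peval2 f (x0, d)"
    using strict_mono_onD[OF incr[of x0], of c y0] strict_mono_onD[OF incr[of x0], of y0 d] \<open>\<eta> > 0\<close>
    by (simp_all add: c_def d_def)
  moreover have "open {x. peval2 f (x, c) < 0 \<and> 0 < peval2 f (x, d)}"
    by (intro open_Collect_conj open_Collect_less) (auto intro!: continuous_intros)
  ultimately obtain r where "r > 0"
    and r: "ball x0 r \<subseteq> {x. peval2 f (x, c) < 0 \<and> 0 < peval2 f (x, d)}"
    using open_contains_ball by blast
  define \<delta> where "\<delta> = min \<eta> (r / 2)"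
  have "graph_box (zero_set f) a b c d" if ab: "x0 - \<delta> \<le> a" "a < b" "b \<le> x0 + \<delta>" for a b
  proof (rule graph_box_zero_set)
    show "a < b" "c < d" using ab \<open>\<eta> > 0\<close> by (simp_all add: c_def d_def)
    fix x assume "x \<in> {a..b}"
    then have "\<bar>x - x0\<bar> \<le> \<eta>" "dist x0 x < r"
      using ab \<open>r > 0\<close> by (auto simp: \<delta>_def dist_real_def)
    then show "strict_mono_on {c..d} (\<lambda>y. peval2 f (x, y)) \<and> peval2 f (x, c) < 0 \<and> 0 < peval2 f (x, d)"
      using incr r by (auto simp: c_def d_def)
  qed
  moreover have "\<delta> > 0" "c < y0" "y0 < d"
    using \<open>\<eta> > 0\<close> \<open>r > 0\<close> by (simp_all add: \<delta>_def c_def d_def)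
  ultimately show ?thesis
    unfolding locally_graph_def p fst_conv snd_conv by blast
qed

lemma locally_graph_zero_set:
  assumes "p \<in> zero_set f" "peval2 (pderiv f) p \<noteq> 0"
  shows "locally_graph (zero_set f) p"
proof (cases "0 < peval2 (pderiv f) p")
  case True
  with assms(1) show ?thesis by (rule locally_graph_zero_set_pderiv_pos)
next
  case False
  have "zero_set (- f) = zero_set f"
    by (simp add: zero_set_def)
  moreover have "0 < peval2 (pderiv (- f)) p"
    using False assms(2) by (simp add: pderiv_minus)
  ultimately show ?thesis
    using locally_graph_zero_set_pderiv_pos[of p "- f"] assms(1) by simp
qed

definition dyadic_lo :: "nat \<Rightarrow> real \<Rightarrow> real" where
  "dyadic_lo n x = of_int \<lfloor>x * 2 ^ n\<rfloor> / 2 ^ n"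

definition dyadic_hi :: "nat \<Rightarrow> real \<Rightarrow> real" where
  "dyadic_hi n x = dyadic_lo n x + 1 / 2 ^ n"

definition dyadics :: "real set" where
  "dyadics = (\<lambda>(k, n). of_int k / 2 ^ n) ` (UNIV :: (int \<times> nat) set)"

lemma countable_dyadics: "countable dyadics"
  unfolding dyadics_def by simp

lemma dyadic_lo_in_dyadics: "dyadic_lo n x \<in> dyadics"
  unfolding dyadics_def dyadic_lo_def by (rule image_eqI[of _ _ "(\<lfloor>x * 2 ^ n\<rfloor>, n)"]) simp_all

lemma dyadic_hi_eq: "dyadic_hi n x = of_int (\<lfloor>x * 2 ^ n\<rfloor> + 1) / 2 ^ n"
  unfolding dyadic_hi_def dyadic_lo_def by (simp add: add_divide_distrib)

lemma dyadic_lo_le: "dyadic_lo n x \<le> x"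
  unfolding dyadic_lo_def by (simp add: divide_le_eq)

lemma less_dyadic_hi: "x < dyadic_hi n x"
proof -
  have "x * 2 ^ n < of_int (\<lfloor>x * 2 ^ n\<rfloor> + 1)" by simp
  then show ?thesis unfolding dyadic_hi_eq by (simp add: less_divide_eq)
qed

lemma dyadic_le_lo:
  assumes "of_int k / 2 ^ n \<le> x"
  shows "of_int k / 2 ^ n \<le> dyadic_lo n x"
proof -
  have "of_int k \<le> x * 2 ^ n" using assms by (simp add: divide_le_eq)
  then have "k \<le> \<lfloor>x * 2 ^ n\<rfloor>" by (simp add: le_floor_iff)
  then show ?thesis unfolding dyadic_lo_def by (simp add: divide_right_mono)
qed

lemma dyadic_hi_le:
  assumes "x < of_int k / 2 ^ n"
  shows "dyadic_hi n x \<le> of_int k / 2 ^ n"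
proof -
  have "x * 2 ^ n < of_int k" using assms by (simp add: less_divide_eq)
  then have "\<lfloor>x * 2 ^ n\<rfloor> < k" by (simp add: floor_less_iff)
  then have "\<lfloor>x * 2 ^ n\<rfloor> + 1 \<le> k" by simp
  then show ?thesis unfolding dyadic_hi_eq by (simp add: divide_right_mono)
qed

lemma dyadic_lo_eq:
  assumes "dyadic_lo n y \<le> x" "x < dyadic_hi n y"
  shows "dyadic_lo n x = dyadic_lo n y"
proof -
  have "of_int \<lfloor>y * 2 ^ n\<rfloor> \<le> x * 2 ^ n" "x * 2 ^ n < of_int \<lfloor>y * 2 ^ n\<rfloor> + 1"
    using assms unfolding dyadic_lo_def dyadic_hi_eq by (simp_all add: divide_le_eq less_divide_eq)
  then have "\<lfloor>x * 2 ^ n\<rfloor> = \<lfloor>y * 2 ^ n\<rfloor>" by (rule floor_unique)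
  then show ?thesis unfolding dyadic_lo_def by simp
qed

lemma dyadic_rescale:
  assumes "m \<le> n"
  shows "of_int k / 2 ^ m = of_int (k * 2 ^ (n - m)) / (2 ^ n :: real)"
proof -
  obtain j where "n = m + j" using assms by (metis le_add_diff_inverse)
  then show ?thesis by (simp add: power_add)
qed

lemma dyadic_lo_mono:
  assumes "m \<le> n"
  shows "dyadic_lo m x \<le> dyadic_lo n x"
proof -
  have eq: "dyadic_lo m x = of_int (\<lfloor>x * 2 ^ m\<rfloor> * 2 ^ (n - m)) / 2 ^ n"
    unfolding dyadic_lo_def using assms by (rule dyadic_rescale)
  with dyadic_lo_le[of m x] have "of_int (\<lfloor>x * 2 ^ m\<rfloor> * 2 ^ (n - m)) / 2 ^ n \<le> x"
    by simp
  then have "of_int (\<lfloor>x * 2 ^ m\<rfloor> * 2 ^ (n - m)) / 2 ^ n \<le> dyadic_lo n x"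
    by (rule dyadic_le_lo)
  with eq show ?thesis by simp
qed

lemma dyadic_hi_antimono:
  assumes "m \<le> n"
  shows "dyadic_hi n x \<le> dyadic_hi m x"
proof -
  have eq: "dyadic_hi m x = of_int ((\<lfloor>x * 2 ^ m\<rfloor> + 1) * 2 ^ (n - m)) / 2 ^ n"
    unfolding dyadic_hi_eq using assms by (rule dyadic_rescale)
  with less_dyadic_hi[of x m] have "x < of_int ((\<lfloor>x * 2 ^ m\<rfloor> + 1) * 2 ^ (n - m)) / 2 ^ n"
    by simp
  then have "dyadic_hi n x \<le> of_int ((\<lfloor>x * 2 ^ m\<rfloor> + 1) * 2 ^ (n - m)) / 2 ^ n"
    by (rule dyadic_hi_le)
  with eq show ?thesis by simp
qed

lemma dyadic_mid:
  "dyadic_lo n x + 1 / 2 ^ Suc n \<in> dyadics"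
  "dyadic_lo n x < dyadic_lo n x + 1 / 2 ^ Suc n"
  "dyadic_lo n x + 1 / 2 ^ Suc n < dyadic_hi n x"
proof -
  define k where "k = \<lfloor>x * 2 ^ n\<rfloor>"
  have "of_int (2 * k + 1) / 2 ^ Suc n = 2 * of_int k / (2 * 2 ^ n) + 1 / (2 ^ Suc n :: real)"
    by (simp add: add_divide_distrib)
  also have "\<dots> = dyadic_lo n x + 1 / 2 ^ Suc n"
    unfolding dyadic_lo_def k_def by simp
  finally have mid_eq: "dyadic_lo n x + 1 / 2 ^ Suc n = of_int (2 * k + 1) / 2 ^ Suc n" ..
  show "dyadic_lo n x + 1 / 2 ^ Suc n \<in> dyadics"
    unfolding dyadics_def mid_eq by (rule image_eqI[of _ _ "(2 * k + 1, Suc n)"]) simp_all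
  show "dyadic_lo n x < dyadic_lo n x + 1 / 2 ^ Suc n"
    by simp
  show "dyadic_lo n x + 1 / 2 ^ Suc n < dyadic_hi n x"
    unfolding dyadic_hi_def by (simp add: divide_strict_left_mono)
qed

section \<open>The dyadic cell decomposition\<close>

definition dyadic_level :: "(real \<times> real) set \<Rightarrow> real \<times> real \<Rightarrow> nat \<Rightarrow> bool" where
  "dyadic_level X p n \<longleftrightarrow> dyadic_lo n (fst p) < fst p \<and>
     (\<exists>c d. graph_box X (dyadic_lo n (fst p)) (dyadic_hi n (fst p)) c d \<and> c < snd p \<and> snd p < d)"

definition dyadic_regular :: "(real \<times> real) set \<Rightarrow> (real \<times> real) set" where
  "dyadic_regular X = {p \<in> X. \<exists>n. dyadic_level X p n}"

(* Meaningful only for p in dyadic_regular X, where the LEAST level exists; the strip chosen by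
   SOME does not affect the arc (graph_fun_agree). *)
definition dyadic_cell :: "(real \<times> real) set \<Rightarrow> real \<times> real \<Rightarrow> (real \<times> real) set" where
  "dyadic_cell X p =
    (let n = LEAST n. dyadic_level X p n;
         a = dyadic_lo n (fst p); b = dyadic_hi n (fst p);
         (c, d) = SOME (c, d). graph_box X a b c d \<and> c < snd p \<and> snd p < d
     in graph_arc X a b c d)"

definition dyadic_cells :: "(real \<times> real) set \<Rightarrow> (real \<times> real) set set" where
  "dyadic_cells X = (\<lambda>p. {p}) ` (X - dyadic_regular X) \<union> dyadic_cell X ` dyadic_regular X"

lemma dyadic_cellE:
  assumes "p \<in> dyadic_regular X"
  obtains n c d where
    "graph_box X (dyadic_lo n (fst p)) (dyadic_hi n (fst p)) c d"
    "dyadic_lo n (fst p) < fst p" "graph_fun X c d (fst p) = snd p"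
    "dyadic_cell X p = graph_arc X (dyadic_lo n (fst p)) (dyadic_hi n (fst p)) c d"
    "\<forall>m. dyadic_level X p m \<longrightarrow> n \<le> m"
proof -
  define n where "n = (LEAST n. dyadic_level X p n)"
  define a b where "a = dyadic_lo n (fst p)" and "b = dyadic_hi n (fst p)"
  define P where "P = (\<lambda>(c, d). graph_box X a b c d \<and> c < snd p \<and> snd p < d)"
  define c d where "c = fst (Eps P)" and "d = snd (Eps P)"
  have "\<exists>n. dyadic_level X p n" using assms by (simp add: dyadic_regular_def)
  then have level: "dyadic_level X p n"
    unfolding n_def by (rule LeastI_ex)
  have least: "\<forall>m. dyadic_level X p m \<longrightarrow> n \<le> m"
    unfolding n_def by (auto intro: Least_le)
  from level obtain c0 d0 where "P (c0, d0)"
    unfolding dyadic_level_def P_def a_def b_def by auto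
  then have "P (c, d)"
    unfolding c_def d_def by (simp add: someI)
  then have box: "graph_box X a b c d" "c < snd p" "snd p < d"
    unfolding P_def by simp_all
  have "a < fst p" using level unfolding dyadic_level_def a_def by simp
  moreover have "fst p < b" unfolding b_def by (rule less_dyadic_hi)
  moreover have "p \<in> X" using assms by (simp add: dyadic_regular_def)
  ultimately have on_graph: "graph_fun X c d (fst p) = snd p"
    using box by (intro graph_box_graph_fun_unique[OF box(1)]) auto
  have cell: "dyadic_cell X p = graph_arc X a b c d"
    unfolding dyadic_cell_def Let_def
    by (simp add: a_def b_def c_def d_def P_def case_prod_beta flip: n_def)
  show ?thesis
    by (rule that[OF box(1)[unfolded a_def b_def] \<open>a < fst p\<close>[unfolded a_def] on_graph
          cell[unfolded a_def b_def] least])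
qed

lemma dyadic_cell_graph_arc:
  assumes "p \<in> dyadic_regular X"
  shows "\<exists>n c d. graph_box X (dyadic_lo n (fst p)) (dyadic_hi n (fst p)) c d \<and>
    dyadic_lo n (fst p) < fst p \<and> graph_fun X c d (fst p) = snd p \<and>
    dyadic_cell X p = graph_arc X (dyadic_lo n (fst p)) (dyadic_hi n (fst p)) c d"
proof -
  obtain n c d where "graph_box X (dyadic_lo n (fst p)) (dyadic_hi n (fst p)) c d"
    "dyadic_lo n (fst p) < fst p" "graph_fun X c d (fst p) = snd p"
    "dyadic_cell X p = graph_arc X (dyadic_lo n (fst p)) (dyadic_hi n (fst p)) c d"
    "\<forall>m. dyadic_level X p m \<longrightarrow> n \<le> m"
    using assms by (rule dyadic_cellE)
  then show ?thesis by blast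
qed

lemma mem_dyadic_cell_self:
  assumes "p \<in> dyadic_regular X"
  shows "p \<in> dyadic_cell X p"
proof -
  obtain n c d where lo: "dyadic_lo n (fst p) < fst p" and on_graph: "graph_fun X c d (fst p) = snd p"
    and cell: "dyadic_cell X p = graph_arc X (dyadic_lo n (fst p)) (dyadic_hi n (fst p)) c d"
    using dyadic_cell_graph_arc[OF assms] by blast
  have "fst p \<in> {dyadic_lo n (fst p)<..<dyadic_hi n (fst p)}"
    using lo less_dyadic_hi[of "fst p" n] by simp
  then have "(fst p, graph_fun X c d (fst p)) \<in> dyadic_cell X p"
    unfolding cell graph_arc_def by (rule imageI)
  then show ?thesis by (simp add: on_graph)
qed

lemma dyadic_level_graph_arc:
  assumes box: "graph_box X (dyadic_lo n x) (dyadic_hi n x) c d"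
    and t: "dyadic_lo n x < t" "t < dyadic_hi n x"
  shows "dyadic_level X (t, graph_fun X c d t) n" "(t, graph_fun X c d t) \<in> X"
    "dyadic_lo n t = dyadic_lo n x" "dyadic_hi n t = dyadic_hi n x"
proof -
  show lo: "dyadic_lo n t = dyadic_lo n x"
    using t by (intro dyadic_lo_eq) auto
  then show hi: "dyadic_hi n t = dyadic_hi n x"
    by (simp add: dyadic_hi_def)
  have "t \<in> {dyadic_lo n x..dyadic_hi n x}" using t by auto
  from graph_box_graph_fun[OF box this]
  have "c < graph_fun X c d t" "graph_fun X c d t < d" "(t, graph_fun X c d t) \<in> X"
    by auto
  then show "(t, graph_fun X c d t) \<in> X" "dyadic_level X (t, graph_fun X c d t) n"
    using box t(1) unfolding dyadic_level_def fst_conv snd_conv lo hi by blast+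
qed

lemma dyadic_cell_eq:
  assumes "closed X" "p \<in> dyadic_regular X" "q \<in> dyadic_cell X p"
  shows "q \<in> dyadic_regular X" "dyadic_cell X q = dyadic_cell X p"
proof -
  obtain n c d where box: "graph_box X (dyadic_lo n (fst p)) (dyadic_hi n (fst p)) c d"
    and p_in: "dyadic_lo n (fst p) < fst p" and p_on: "graph_fun X c d (fst p) = snd p"
    and cell_p: "dyadic_cell X p = graph_arc X (dyadic_lo n (fst p)) (dyadic_hi n (fst p)) c d"
    and p_least: "\<forall>m. dyadic_level X p m \<longrightarrow> n \<le> m"
    using assms(2) by (rule dyadic_cellE)
  define a b where "a = dyadic_lo n (fst p)" and "b = dyadic_hi n (fst p)"
  have "a < fst p" "fst p < b" using p_in less_dyadic_hi unfolding a_def b_def by auto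
  obtain t where t: "a < t" "t < b" and q: "q = (t, graph_fun X c d t)"
    using assms(3) unfolding cell_p graph_arc_def a_def b_def by auto
  note arc_t = dyadic_level_graph_arc[OF box t[unfolded a_def b_def]]
  have q_level: "dyadic_level X q n" and ab: "dyadic_lo n t = a" "dyadic_hi n t = b"
    using arc_t unfolding q a_def b_def by simp_all
  then show q_reg: "q \<in> dyadic_regular X"
    using arc_t(2) unfolding dyadic_regular_def q by blast
  have fq: "fst q = t" "snd q = graph_fun X c d t" using q by simp_all
  obtain m c' d' where box': "graph_box X (dyadic_lo m (fst q)) (dyadic_hi m (fst q)) c' d'"
    and q_in: "dyadic_lo m (fst q) < fst q" and q_on: "graph_fun X c' d' (fst q) = snd q"
    and cell_q: "dyadic_cell X q = graph_arc X (dyadic_lo m (fst q)) (dyadic_hi m (fst q)) c' d'"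
    and q_least: "\<forall>k. dyadic_level X q k \<longrightarrow> m \<le> k"
    using q_reg by (rule dyadic_cellE)
  define a' b' where "a' = dyadic_lo m t" and "b' = dyadic_hi m t"
  have "m \<le> n" using q_least q_level by blast
  then have nested: "a' \<le> a" "b \<le> b'"
    using dyadic_lo_mono[of m n t] dyadic_hi_antimono[of m n t] ab unfolding a'_def b'_def by auto
  have t_in: "t \<in> {a..b} \<inter> {a'..b'}"
    using t nested q_in less_dyadic_hi[of t m] unfolding fq a'_def b'_def by auto
  have agree: "graph_fun X c d x = graph_fun X c' d' x" if "x \<in> {a..b}" for x
  proof -
    have "x \<in> {a..b} \<inter> {a'..b'}" using that nested by auto
    moreover have "graph_fun X c d t = graph_fun X c' d' t" using q_on fq by simp
    ultimately show ?thesis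
      using graph_fun_agree[OF assms(1) box box'[unfolded fq], of t x] t_in
      unfolding a_def b_def a'_def b'_def by blast
  qed
  have "dyadic_level X p m"
  proof -
    have "a' < fst p" "fst p < b'" using nested \<open>a < fst p\<close> \<open>fst p < b\<close> by auto
    then have "dyadic_level X (fst p, graph_fun X c' d' (fst p)) m"
      using box'[unfolded fq] unfolding a'_def b'_def by (intro dyadic_level_graph_arc(1))
    moreover have "graph_fun X c' d' (fst p) = snd p"
      using agree[of "fst p"] p_on \<open>a < fst p\<close> \<open>fst p < b\<close> by simp
    ultimately show ?thesis by simp
  qed
  then have "n \<le> m" using p_least by blast
  with \<open>m \<le> n\<close> have "m = n" by simp
  then have "dyadic_cell X q = graph_arc X a b c' d'"
    using cell_q ab fq by simp
  also have "\<dots> = graph_arc X a b c d"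
    unfolding graph_arc_def using agree by (intro image_cong) auto
  finally show "dyadic_cell X q = dyadic_cell X p"
    using cell_p unfolding a_def b_def by simp
qed

lemma dyadic_cell_meets_dyadics:
  assumes "closed X" "p \<in> dyadic_regular X"
  obtains q where "q \<in> dyadic_regular X" "fst q \<in> dyadics" "dyadic_cell X q = dyadic_cell X p"
proof -
  obtain n c d where cell: "dyadic_cell X p = graph_arc X (dyadic_lo n (fst p)) (dyadic_hi n (fst p)) c d"
    using dyadic_cell_graph_arc[OF assms(2)] by blast
  define t where "t = dyadic_lo n (fst p) + 1 / 2 ^ Suc n"
  have "t \<in> {dyadic_lo n (fst p)<..<dyadic_hi n (fst p)}"
    using dyadic_mid(2,3) unfolding t_def by simp
  then have "(t, graph_fun X c d t) \<in> dyadic_cell X p"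
    unfolding cell graph_arc_def by (rule imageI)
  with dyadic_cell_eq[OF assms] have "(t, graph_fun X c d t) \<in> dyadic_regular X"
    "dyadic_cell X (t, graph_fun X c d t) = dyadic_cell X p"
    by blast+
  moreover have "fst (t, graph_fun X c d t) \<in> dyadics"
    unfolding t_def fst_conv by (rule dyadic_mid(1))
  ultimately show ?thesis using that by blast
qed

lemma dyadic_regular_if_locally_graph:
  assumes "p \<in> X" "locally_graph X p" "fst p \<notin> dyadics"
  shows "p \<in> dyadic_regular X"
proof -
  obtain \<delta> c d where "\<delta> > 0" "c < snd p" "snd p < d"
    and box: "\<And>a b. fst p - \<delta> \<le> a \<Longrightarrow> a < b \<Longrightarrow> b \<le> fst p + \<delta> \<Longrightarrow> graph_box X a b c d"
    using assms(2) unfolding locally_graph_def by blast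
  obtain n where n: "(1 / 2) ^ n < \<delta>"
    using real_arch_pow_inv[OF \<open>\<delta> > 0\<close>, of "1 / 2"] by auto
  have width: "dyadic_hi n (fst p) - dyadic_lo n (fst p) = (1 / 2) ^ n"
    by (simp add: dyadic_hi_def power_one_over)
  have "dyadic_lo n (fst p) \<noteq> fst p"
    using dyadic_lo_in_dyadics assms(3) by metis
  then have lo: "dyadic_lo n (fst p) < fst p"
    using dyadic_lo_le[of n "fst p"] by simp
  moreover have "graph_box X (dyadic_lo n (fst p)) (dyadic_hi n (fst p)) c d"
    using width n less_dyadic_hi[of "fst p" n] lo by (intro box) auto
  ultimately have "dyadic_level X p n"
    unfolding dyadic_level_def using \<open>c < snd p\<close> \<open>snd p < d\<close> by blast
  with assms(1) show ?thesis
    unfolding dyadic_regular_def by blast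
qed

lemma countable_over_dyadics:
  assumes "\<And>x. countable {y. (x, y) \<in> X}"
  shows "countable (X \<inter> dyadics \<times> UNIV)"
proof -
  have "X \<inter> dyadics \<times> UNIV \<subseteq> (\<Union>x\<in>dyadics. Pair x ` {y. (x, y) \<in> X})"
    by auto
  moreover have "countable (\<Union>x\<in>dyadics. Pair x ` {y. (x, y) \<in> X})"
    by (intro countable_UN countable_dyadics countable_image assms)
  ultimately show ?thesis
    by (rule countable_subset)
qed

lemma countable_dyadic_cells:
  assumes "closed X" "\<And>x. countable {y. (x, y) \<in> X}"
    and "countable {p \<in> X. \<not> locally_graph X p}"
  shows "countable (dyadic_cells X)"
proof -
  have "X - dyadic_regular X \<subseteq> {p \<in> X. \<not> locally_graph X p} \<union> (X \<inter> dyadics \<times> UNIV)"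
  proof
    fix p assume p: "p \<in> X - dyadic_regular X"
    show "p \<in> {p \<in> X. \<not> locally_graph X p} \<union> (X \<inter> dyadics \<times> UNIV)"
    proof (cases "locally_graph X p")
      case True
      then have "fst p \<in> dyadics" using p dyadic_regular_if_locally_graph by blast
      with p show ?thesis by (auto simp: mem_Times_iff)
    qed (use p in auto)
  qed
  moreover have "countable ({p \<in> X. \<not> locally_graph X p} \<union> (X \<inter> dyadics \<times> UNIV))"
    using assms(3) countable_over_dyadics[OF assms(2)] by (rule countable_Un)
  ultimately have "countable (X - dyadic_regular X)"
    by (rule countable_subset)
  have "dyadic_cell X ` dyadic_regular X \<subseteq> dyadic_cell X ` (X \<inter> dyadics \<times> UNIV)"
  proof
    fix e assume "e \<in> dyadic_cell X ` dyadic_regular X"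
    then obtain p where "p \<in> dyadic_regular X" "e = dyadic_cell X p" by blast
    then obtain q where q: "q \<in> dyadic_regular X" "fst q \<in> dyadics" "e = dyadic_cell X q"
      using dyadic_cell_meets_dyadics[OF assms(1)] by metis
    then have "q \<in> X \<inter> dyadics \<times> UNIV"
      by (auto simp: dyadic_regular_def mem_Times_iff)
    then show "e \<in> dyadic_cell X ` (X \<inter> dyadics \<times> UNIV)" using q(3) by (rule rev_image_eqI)
  qed
  moreover have "countable (dyadic_cell X ` (X \<inter> dyadics \<times> UNIV))"
    using countable_over_dyadics[OF assms(2)] by (rule countable_image)
  ultimately have "countable (dyadic_cell X ` dyadic_regular X)"
    by (rule countable_subset)
  with \<open>countable (X - dyadic_regular X)\<close> show ?thesis
    unfolding dyadic_cells_def by simp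
qed

lemma mem_dyadic_cells_eq:
  assumes "closed X" "e \<in> dyadic_cells X" "z \<in> e"
  shows "e = (if z \<in> dyadic_regular X then dyadic_cell X z else {z})"
  using assms(2) unfolding dyadic_cells_def
proof
  assume "e \<in> (\<lambda>p. {p}) ` (X - dyadic_regular X)"
  with assms(3) show ?thesis by auto
next
  assume "e \<in> dyadic_cell X ` dyadic_regular X"
  then obtain p where p: "p \<in> dyadic_regular X" "e = dyadic_cell X p" by blast
  with assms(3) have "z \<in> dyadic_regular X" "dyadic_cell X z = dyadic_cell X p"
    using dyadic_cell_eq[OF assms(1) p(1)] by simp_all
  with p(2) show ?thesis by simp
qed

lemma dyadic_cells_disjoint:
  assumes "closed X" "e \<in> dyadic_cells X" "e' \<in> dyadic_cells X" "e \<noteq> e'"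
  shows "e \<inter> e' = {}"
proof (rule ccontr)
  assume "e \<inter> e' \<noteq> {}"
  then obtain z where "z \<in> e" "z \<in> e'" by blast
  have "e = (if z \<in> dyadic_regular X then dyadic_cell X z else {z})"
    using assms(1,2) \<open>z \<in> e\<close> by (rule mem_dyadic_cells_eq)
  moreover have "e' = (if z \<in> dyadic_regular X then dyadic_cell X z else {z})"
    using assms(1,3) \<open>z \<in> e'\<close> by (rule mem_dyadic_cells_eq)
  ultimately have "e = e'" by simp
  with assms(4) show False by simp
qed

lemma dyadic_cell_is_cell:
  assumes "closed X" "X \<in> semialgebraic" "p \<in> dyadic_regular X"
  shows "dyadic_cell X p \<in> semialgebraic" "cell1 (dyadic_cell X p)"
proof -
  obtain n c d where "graph_box X (dyadic_lo n (fst p)) (dyadic_hi n (fst p)) c d"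
    "dyadic_cell X p = graph_arc X (dyadic_lo n (fst p)) (dyadic_hi n (fst p)) c d"
    using dyadic_cell_graph_arc[OF assms(3)] by blast
  then show "dyadic_cell X p \<in> semialgebraic" "cell1 (dyadic_cell X p)"
    using semialgebraic_graph_arc[OF assms(2)] cell1_graph_arc[OF assms(1)] by simp_all
qed

lemma finite_components_Int_dyadic_cells:
  assumes "closed X" "connected K" "K \<subseteq> X" "e \<in> dyadic_cells X"
  shows "finite (components (K \<inter> e))"
  using assms(4) unfolding dyadic_cells_def
proof
  assume "e \<in> (\<lambda>p. {p}) ` (X - dyadic_regular X)"
  then obtain p where "e = {p}" by blast
  then have "K \<inter> e = {} \<or> K \<inter> e = {p}" by blast
  then have "connected (K \<inter> e)" by auto
  then show ?thesis by (rule finite_components_connected)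
next
  assume "e \<in> dyadic_cell X ` dyadic_regular X"
  then obtain p where p: "p \<in> dyadic_regular X" "e = dyadic_cell X p" by blast
  obtain n c d where "graph_box X (dyadic_lo n (fst p)) (dyadic_hi n (fst p)) c d"
    "dyadic_cell X p = graph_arc X (dyadic_lo n (fst p)) (dyadic_hi n (fst p)) c d"
    using dyadic_cell_graph_arc[OF p(1)] by blast
  with assms(1-3) p(2) show ?thesis
    by (simp add: finite_components_Int_graph_arc)
qed

lemma Union_dyadic_cells:
  assumes "closed X"
  shows "\<Union>(dyadic_cells X) = X"
proof
  show "\<Union>(dyadic_cells X) \<subseteq> X"
  proof
    fix z assume "z \<in> \<Union>(dyadic_cells X)"
    then obtain e where "e \<in> dyadic_cells X" "z \<in> e" by blast
    then consider p where "p \<in> X - dyadic_regular X" "z \<in> {p}"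
      | p where "p \<in> dyadic_regular X" "z \<in> dyadic_cell X p"
      unfolding dyadic_cells_def by blast
    then show "z \<in> X"
    proof cases
      case 1
      then show ?thesis by simp
    next
      case 2
      then have "z \<in> dyadic_regular X" using dyadic_cell_eq(1)[OF assms] by blast
      then show ?thesis by (simp add: dyadic_regular_def)
    qed
  qed
  show "X \<subseteq> \<Union>(dyadic_cells X)"
  proof
    fix z assume "z \<in> X"
    show "z \<in> \<Union>(dyadic_cells X)"
    proof (cases "z \<in> dyadic_regular X")
      case True
      then have "dyadic_cell X z \<in> dyadic_cells X" unfolding dyadic_cells_def by blast
      with mem_dyadic_cell_self[OF True] show ?thesis by blast
    next
      case False
      with \<open>z \<in> X\<close> have "{z} \<in> dyadic_cells X" unfolding dyadic_cells_def by blast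
      then show ?thesis by blast
    qed
  qed
qed

lemma dyadic_cells_decomposition:
  assumes "closed X" "X \<in> semialgebraic" "\<And>x. countable {y. (x, y) \<in> X}"
    and "countable {p \<in> X. \<not> locally_graph X p}"
  shows "cell_decomposition (dyadic_cells X) X" "finiteness_property (dyadic_cells X) X"
proof -
  have cells: "e \<noteq> {} \<and> e \<in> semialgebraic \<and> (cell0 e \<or> cell1 e)" if "e \<in> dyadic_cells X" for e
    using that unfolding dyadic_cells_def
  proof
    assume "e \<in> (\<lambda>p. {p}) ` (X - dyadic_regular X)"
    then show ?thesis
      using semialgebraic_singleton unfolding cell0_def by auto
  next
    assume "e \<in> dyadic_cell X ` dyadic_regular X"
    then obtain p where "p \<in> dyadic_regular X" "e = dyadic_cell X p" by blast
    then show ?thesis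
      using mem_dyadic_cell_self[of p X] dyadic_cell_is_cell[OF assms(1,2)] by auto
  qed
  then have "\<forall>e\<in>dyadic_cells X. is_cell e \<and> e \<noteq> {}"
    unfolding is_cell_def by blast
  moreover have "\<forall>e\<in>dyadic_cells X. \<forall>e'\<in>dyadic_cells X. e \<noteq> e' \<longrightarrow> e \<inter> e' = {}"
    using dyadic_cells_disjoint[OF assms(1)] by blast
  ultimately show "cell_decomposition (dyadic_cells X) X"
    unfolding cell_decomposition_def
    using countable_dyadic_cells[OF assms(1,3,4)] Union_dyadic_cells[OF assms(1)] by blast
  show "finiteness_property (dyadic_cells X) X"
  proof (rule finiteness_propertyI)
    show "cell0 e \<or> cell1 e" if "e \<in> dyadic_cells X" for e
      using cells[OF that] by blast
    show "finite (components (K \<inter> e))" if "connected K" "K \<subseteq> X" "e \<in> dyadic_cells X" for K e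
      using assms(1) that by (rule finite_components_Int_dyadic_cells)
  qed
qed

section \<open>Finite unions of vertical lines\<close>

lemma connected_subset_vertical_lines:
  fixes R :: "real set"
  assumes "finite R" "connected K" "K \<subseteq> R \<times> UNIV"
  shows "K \<inter> {r} \<times> UNIV = {} \<or> K \<subseteq> {r} \<times> UNIV"
proof -
  have "connected (fst ` K)"
    using assms(2) by (intro connected_continuous_image continuous_intros)
  moreover have "fst ` K \<subseteq> R"
    using assms(3) by auto
  then have "finite (fst ` K)"
    using assms(1) by (rule finite_subset)
  ultimately have "fst ` K = {} \<or> (\<exists>a. fst ` K = {a})"
    using connected_finite_iff_sing by blast
  then show ?thesis
  proof
    assume "\<exists>a. fst ` K = {a}"
    then obtain a where "fst ` K = {a}" by blast
    then have fst_K: "fst z = a" if "z \<in> K" for z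
      using that by blast
    show ?thesis
    proof (cases "a = r")
      case True
      then have "K \<subseteq> {r} \<times> UNIV" using fst_K by (auto simp: mem_Times_iff)
      then show ?thesis ..
    next
      case False
      then have "K \<inter> {r} \<times> UNIV = {}" using fst_K by (auto simp: mem_Times_iff)
      then show ?thesis ..
    qed
  qed simp
qed

lemma vertical_lines_decomposition:
  fixes R :: "real set"
  assumes "finite R"
  shows "cell_decomposition ((\<lambda>r. {r} \<times> UNIV) ` R) (R \<times> UNIV)"
    "finiteness_property ((\<lambda>r. {r} \<times> UNIV) ` R) (R \<times> UNIV)"
proof -
  have "homeomorphism ({r} \<times> UNIV) UNIV snd (Pair r)" for r :: real
    unfolding homeomorphism_def by (auto intro!: continuous_intros)
  then have line: "cell1 ({r} \<times> UNIV)" for r :: real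
    unfolding cell1_iff_homeomorphic_UNIV homeomorphic_def by blast
  have "\<forall>e\<in>(\<lambda>r. {r} \<times> UNIV) ` R. is_cell e \<and> e \<noteq> {}"
    unfolding is_cell_def using line semialgebraic_vertical_line by blast
  moreover have "\<forall>e\<in>(\<lambda>r. {r} \<times> UNIV) ` R. \<forall>e'\<in>(\<lambda>r. {r} \<times> UNIV) ` R. e \<noteq> e' \<longrightarrow> e \<inter> e' = {}"
    by auto
  moreover have "\<Union>((\<lambda>r. {r} \<times> UNIV) ` R) = R \<times> UNIV"
    by auto
  ultimately show "cell_decomposition ((\<lambda>r. {r} \<times> UNIV) ` R) (R \<times> UNIV)"
    unfolding cell_decomposition_def using assms by (simp add: countable_finite)
  show "finiteness_property ((\<lambda>r. {r} \<times> UNIV) ` R) (R \<times> UNIV)"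
  proof (rule finiteness_propertyI)
    show "cell0 e \<or> cell1 e" if "e \<in> (\<lambda>r. {r} \<times> UNIV) ` R" for e
      using that line by blast
    fix K e :: "(real \<times> real) set"
    assume K: "connected K" "K \<subseteq> R \<times> UNIV" and "e \<in> (\<lambda>r. {r} \<times> UNIV) ` R"
    then obtain r where e: "e = {r} \<times> UNIV" by blast
    from connected_subset_vertical_lines[OF assms K, of r] have "connected (K \<inter> e)"
      using K(1) unfolding e by (auto simp: Int_absorb2)
    then show "finite (components (K \<inter> e))"
      by (rule finite_components_connected)
  qed
qed

theorem corollary2p7:
  fixes f :: "real poly poly"
  assumes "irreducible f"
  shows "\<exists>\<A>. cell_decomposition \<A> (zero_set f) \<and> finiteness_property \<A> (zero_set f)"
proof (cases "degree f = 0")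
  case True
  then obtain c where f: "f = [:c:]" by (metis degree_eq_zeroE)
  with assms have "c \<noteq> 0" by (auto simp: irreducible_def)
  then have "finite {x. poly c x = 0}" by (rule poly_roots_finite)
  moreover have "zero_set f = {x. poly c x = 0} \<times> UNIV"
    by (auto simp: f zero_set_def)
  ultimately show ?thesis
    using vertical_lines_decomposition by metis
next
  case False
  have "{p \<in> zero_set f. \<not> locally_graph (zero_set f) p} \<subseteq> {z \<in> zero_set f. peval2 (pderiv f) z = 0}"
    using locally_graph_zero_set by blast
  then have "countable {p \<in> zero_set f. \<not> locally_graph (zero_set f) p}"
    using finite_singular_zero_set[OF assms False] by (meson countable_finite countable_subset)
  moreover have "countable {y. (x, y) \<in> zero_set f}" for x
    using finite_fibre_zero_set[OF assms False] by (rule countable_finite)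
  ultimately show ?thesis
    using dyadic_cells_decomposition[OF closed_zero_set sa_eq[of f, folded zero_set_def]] by blast
qed

end
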